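(* Let $X=(x_1,\ldots,x_L,x_1,\ldots,x_L,\ldots)$ be a periodic sequence of positive reals with period $L$. Assume that for every $c\in[0,1]$ the limit $F_X(c):=\lim_{k\to\infty}F_X(k,c)$ exists and that $c\mapsto F_X(c)$ is continuous on $[0,1]$. Then for every $c\in(0,1]$ the limit $\lim_{n\to\infty}S(X,n,\lceil cn\rceil)^{1/\lceil cn\rceil}$ exists and equals $F_X(c)$.
   Context: For a sequence $X$ of positive reals and integers $1\le k\le n$, $S(X,n,k):=\binom{n}{k}^{-1}\sum_{1\le i_1<\cdots<i_k\le n}x_{i_1}\cdots x_{i_k}$. For $k\ge1$ and $c\in(0,1]$ set $F_X(k,c):=S(X,kL,\lceil ckL\rceil)^{1/\lceil ckL\rceil}$, and set $F_X(k,0):=(x_1+\cdots+x_L)/L$. *)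

theory Defs
  imports "HOL-Analysis.Analysis"
begin

definition S :: "(nat \<Rightarrow> real) \<Rightarrow> nat \<Rightarrow> nat \<Rightarrow> real" where
  "S x n k = (\<Sum>I \<in> {I. I \<subseteq> {1..n} \<and> card I = k}. \<Prod>i\<in>I. x i) / real (n choose k)"

definition FXk :: "(nat \<Rightarrow> real) \<Rightarrow> nat \<Rightarrow> nat \<Rightarrow> real \<Rightarrow> real" where
  "FXk x L k c = (if c = 0 then (\<Sum>i=1..L. x i) / real L
     else root (nat \<lceil>c * real (k * L)\<rceil>) (S x (k * L) (nat \<lceil>c * real (k * L)\<rceil>)))"

end

theory Submission
  imports Defs
begin

text \<open>
  Let \<open>\<mu>\<close> and \<open>M\<close> be the minimum and maximum of \<open>x\<^sub>1, \<dots>, x\<^sub>L\<close>. Adding the variable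
  \<open>x\<^bsub>N+1\<^esub>\<close> updates the elementary symmetric sums by \<open>e\<^bsub>j+1\<^esub> \<mapsto> e\<^bsub>j+1\<^esub> + x\<^bsub>N+1\<^esub> e\<^sub>j\<close>,
  and by induction this shows that both ratios \<open>S(X,N,j+1)/S(X,N,j)\<close> and
  \<open>S(X,N+1,j)/S(X,N,j)\<close> lie in \<open>[\<mu>/M, M/\<mu>]\<close>. Hence \<open>ln S(X,N,j)\<close> is Lipschitz in
  both arguments, uniformly in \<open>N\<close> and \<open>j\<close>. Moving \<open>n\<close> down to the multiple \<open>kL\<close> of the
  period just below it, and \<open>\<lceil>cn\<rceil>\<close> to \<open>\<lceil>ckL\<rceil>\<close>, therefore changes \<open>ln S\<close> by \<open>O(L)\<close> and
  \<open>ln S / \<lceil>cn\<rceil>\<close> by \<open>O(L/n)\<close>, so the whole sequence has the limit of its subsequence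
  \<open>F\<^sub>X(k,c)\<close>.
\<close>

definition esym :: "('a \<Rightarrow> real) \<Rightarrow> 'a set \<Rightarrow> nat \<Rightarrow> real" where
  "esym x A j = (\<Sum>I | I \<subseteq> A \<and> card I = j. \<Prod>i\<in>I. x i)"

lemma subsets_card_Suc_insert:
  assumes "finite A" "a \<notin> A"
  shows "{I. I \<subseteq> insert a A \<and> card I = Suc j}
       = {I. I \<subseteq> A \<and> card I = Suc j} \<union> insert a ` {I. I \<subseteq> A \<and> card I = j}"
proof (intro set_eqI iffI)
  fix I assume "I \<in> {I. I \<subseteq> insert a A \<and> card I = Suc j}"
  then have I: "I \<subseteq> insert a A" "card I = Suc j" by auto
  with assms have "finite I" by (meson finite_insert finite_subset)
  show "I \<in> {I. I \<subseteq> A \<and> card I = Suc j} \<union> insert a ` {I. I \<subseteq> A \<and> card I = j}"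
  proof (cases "a \<in> I")
    case True
    then have "I = insert a (I - {a})" "I - {a} \<subseteq> A" "card (I - {a}) = j"
      using I \<open>finite I\<close> by auto
    then show ?thesis by blast
  qed (use I in auto)
next
  fix I assume "I \<in> {I. I \<subseteq> A \<and> card I = Suc j} \<union> insert a ` {I. I \<subseteq> A \<and> card I = j}"
  moreover have "card (insert a J) = Suc (card J)" if "J \<subseteq> A" for J
    using that assms finite_subset by (metis card_insert_disjoint subsetD)
  ultimately show "I \<in> {I. I \<subseteq> insert a A \<and> card I = Suc j}" by auto
qed

lemma esym_0 [simp]:
  assumes "finite A" shows "esym x A 0 = 1"
proof -
  have "{I. I \<subseteq> A \<and> card I = 0} = {{}}"
    using assms by (auto dest: finite_subset)
  then show ?thesis by (simp add: esym_def)
qed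

lemma esym_empty_Suc [simp]: "esym x {} (Suc j) = 0"
  by (simp add: esym_def)

lemma esym_insert_Suc:
  assumes "finite A" "a \<notin> A"
  shows "esym x (insert a A) (Suc j) = esym x A (Suc j) + x a * esym x A j"
proof -
  let ?P = "\<lambda>j. {I. I \<subseteq> A \<and> card I = j}"
  have fin: "finite (?P j)" for j using assms(1) by simp
  have "inj_on (insert a) (?P j)"
    using assms(2) by (intro inj_onI) (metis Diff_insert_absorb mem_Collect_eq subsetD)
  moreover have "?P (Suc j) \<inter> insert a ` ?P j = {}" using assms(2) by auto
  moreover have "(\<Prod>i\<in>insert a I. x i) = x a * (\<Prod>i\<in>I. x i)" if "I \<in> ?P j" for I
    using that assms by (subst prod.insert) (auto dest: finite_subset[OF _ assms(1)])
  ultimately show ?thesis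
    using fin by (simp add: esym_def subsets_card_Suc_insert[OF assms] sum.union_disjoint
        sum.reindex sum_distrib_left)
qed

lemma esym_empty: "esym x {} j = (if j = 0 then 1 else 0)"
  by (cases j) simp_all

lemma esym_nonneg:
  assumes "finite A" "\<forall>i\<in>A. 0 \<le> x i"
  shows "0 \<le> esym x A j"
  using assms unfolding esym_def by (intro sum_nonneg prod_nonneg) auto

lemma esym_pos:
  assumes "finite A" "\<forall>i\<in>A. 0 < x i" "j \<le> card A"
  shows "0 < esym x A j"
  using assms
proof (induction A arbitrary: j rule: finite_induct)
  case (insert a A)
  show ?case
  proof (cases j)
    case (Suc j')
    have "0 \<le> esym x A j" using insert.hyps insert.prems(1) by (intro esym_nonneg) auto
    moreover have "0 < x a * esym x A j'" using insert Suc by simp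
    ultimately show ?thesis using insert.hyps Suc by (simp add: esym_insert_Suc)
  qed (use insert.hyps in simp)
qed simp

lemma esym_Suc_le:
  assumes "finite A" "\<forall>i\<in>A. 0 \<le> x i \<and> x i \<le> M"
  shows "(real j + 1) * esym x A (Suc j) \<le> (card A - real j) * M * esym x A j"
  using assms
proof (induction A arbitrary: j rule: finite_induct)
  case empty
  then show ?case by (simp add: esym_empty)
next
  case (insert a A)
  have x: "0 \<le> x a" "x a \<le> M" and e: "0 \<le> esym x A i" for i
    using insert by (auto intro: esym_nonneg)
  have IH: "(real i + 1) * esym x A (Suc i) \<le> (card A - real i) * M * esym x A i" for i
    using insert.IH insert.prems by simp
  show ?case
  proof (cases j)
    case 0
    with IH[of 0] insert.hyps x show ?thesis by (simp add: esym_insert_Suc algebra_simps)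
  next
    case (Suc i)
    have "x a * (j * esym x A j) \<le> x a * ((card A - real i) * M * esym x A i)"
      using mult_left_mono[OF IH[of i] x(1)] Suc by (simp add: add.commute)
    moreover have "x a * esym x A j \<le> M * esym x A j" using x e by (intro mult_right_mono)
    ultimately show ?thesis
      using IH[of j] insert.hyps Suc by (simp add: esym_insert_Suc algebra_simps)
  qed
qed

lemma esym_Suc_ge:
  assumes "finite A" "0 \<le> m" "\<forall>i\<in>A. m \<le> x i"
  shows "(card A - real j) * m * esym x A j \<le> (real j + 1) * esym x A (Suc j)"
  using assms(1,3)
proof (induction A arbitrary: j rule: finite_induct)
  case empty
  then show ?case by (simp add: esym_empty)
next
  case (insert a A)
  have x: "m \<le> x a" "0 \<le> x a" and e: "0 \<le> esym x A i" for i
    using insert assms(2) by (auto intro: esym_nonneg order_trans)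
  have IH: "(card A - real i) * m * esym x A i \<le> (real i + 1) * esym x A (Suc i)" for i
    using insert.IH insert.prems by simp
  show ?case
  proof (cases j)
    case 0
    with IH[of 0] insert.hyps x show ?thesis by (simp add: esym_insert_Suc algebra_simps)
  next
    case (Suc i)
    have "x a * ((card A - real i) * m * esym x A i) \<le> x a * (j * esym x A j)"
      using mult_left_mono[OF IH[of i] x(2)] Suc by (simp add: add.commute)
    moreover have "m * esym x A j \<le> x a * esym x A j" using x e by (intro mult_right_mono)
    ultimately show ?thesis
      using IH[of j] insert.hyps Suc by (simp add: esym_insert_Suc algebra_simps)
  qed
qed

lemma S_eq_esym: "S x N j = esym x {1..N} j / (N choose j)"
  by (simp add: S_def esym_def)

lemma Suc_times_choose_Suc: "real (Suc j) * (N choose Suc j) = (real N - real j) * (N choose j)"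
  using gbinomial_mult_1[of "real N" j] by (simp add: binomial_gbinomial algebra_simps)

lemma weighted_mean_between:
  fixes p q u v lo hi :: real
  assumes "0 \<le> p" "0 \<le> q" "0 < p + q" "lo \<le> u" "u \<le> hi" "lo \<le> v" "v \<le> hi"
  shows "lo \<le> (p * u + q * v) / (p + q)" "(p * u + q * v) / (p + q) \<le> hi"
proof -
  have "p * lo + q * lo \<le> p * u + q * v" "p * u + q * v \<le> p * hi + q * hi"
    using assms by (simp_all add: add_mono mult_left_mono)
  with assms(3) show "lo \<le> (p * u + q * v) / (p + q)" "(p * u + q * v) / (p + q) \<le> hi"
    by (simp_all add: field_simps)
qed

lemma abs_ln_diff_le:
  fixes s t lo hi :: real
  assumes "0 < s" "0 < lo" "lo * s \<le> t" "t \<le> hi * s"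
  shows "\<bar>ln t - ln s\<bar> \<le> \<bar>ln lo\<bar> + \<bar>ln hi\<bar>"
proof -
  have "0 < t" using assms mult_pos_pos[of lo s] by linarith
  moreover have "0 < hi" using calculation assms zero_less_mult_pos2[of hi s] by linarith
  ultimately have "ln (lo * s) \<le> ln t" "ln t \<le> ln (hi * s)"
    using assms by simp_all
  with \<open>0 < hi\<close> have "ln lo + ln s \<le> ln t" "ln t \<le> ln hi + ln s"
    using assms by (simp_all add: ln_mult)
  then show ?thesis by linarith
qed

lemma abs_diff_le_steps:
  fixes f :: "nat \<Rightarrow> real"
  assumes "\<And>k. n \<le> k \<Longrightarrow> k < n + d \<Longrightarrow> \<bar>f (Suc k) - f k\<bar> \<le> B"
  shows "\<bar>f (n + d) - f n\<bar> \<le> d * B"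
  using assms
proof (induction d)
  case (Suc d)
  then have "\<bar>f (n + d) - f n\<bar> \<le> d * B" "\<bar>f (Suc (n + d)) - f (n + d)\<bar> \<le> B"
    by simp_all
  then show ?case by (simp add: algebra_simps)
qed simp

lemma abs_div_sub_div_le:
  fixes a b p q C \<beta> d :: real
  assumes "0 < q" "q \<le> p" "p \<le> q + d" "\<bar>a - b\<bar> \<le> C" "\<bar>b\<bar> \<le> q * \<beta>"
  shows "\<bar>a / p - b / q\<bar> \<le> (C + \<beta> * d) / p"
proof -
  have p: "0 < p" using assms by linarith
  have "\<bar>b * (q - p)\<bar> \<le> q * \<beta> * d"
    unfolding abs_mult using assms by (intro mult_mono) auto
  then have "\<bar>b * (q - p) / (p * q)\<bar> \<le> \<beta> * d / p"
    using p assms(1) by (simp add: abs_divide field_simps)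
  moreover have "\<bar>(a - b) / p\<bar> \<le> C / p"
    using assms(4) p by (simp add: abs_divide divide_right_mono)
  moreover have "\<bar>a / p - b / q\<bar> \<le> \<bar>(a - b) / p\<bar> + \<bar>b * (q - p) / (p * q)\<bar>"
  proof -
    have "a / p - b / q = (a - b) / p + b * (q - p) / (p * q)"
      using p assms(1) by (simp add: field_simps)
    then show ?thesis by (simp only: abs_triangle_ineq)
  qed
  ultimately show ?thesis by (simp add: add_divide_distrib)
qed

lemma ceiling_block_bounds:
  fixes c :: real and L n :: nat
  assumes "1 \<le> L" "L \<le> n" "0 < c" "c \<le> 1"
  defines "N \<equiv> n div L * L"
  shows "1 \<le> nat \<lceil>c * N\<rceil>" "nat \<lceil>c * N\<rceil> \<le> N" "N \<le> n" "n \<le> N + L"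
    "nat \<lceil>c * N\<rceil> \<le> nat \<lceil>c * n\<rceil>" "nat \<lceil>c * n\<rceil> \<le> nat \<lceil>c * N\<rceil> + L"
    "nat \<lceil>c * n\<rceil> \<le> n" "c * n \<le> nat \<lceil>c * n\<rceil>"
proof -
  have n: "n = N + n mod L" by (simp add: N_def)
  moreover have "n mod L < L" using assms(1) by simp
  moreover have "1 \<le> N"
    using assms(1,2) div_greater_zero_iff[of n L] by (simp add: N_def Suc_le_eq)
  ultimately have N: "N \<le> n" "n < N + L" "1 \<le> N" by linarith+
  then show "N \<le> n" "n \<le> N + L" by simp_all
  have cN: "0 < c * N" "c * N \<le> N" using N assms(3,4) by (simp_all add: mult_left_le_one_le)
  then show "1 \<le> nat \<lceil>c * N\<rceil>" "nat \<lceil>c * N\<rceil> \<le> N"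
    by (simp_all add: le_nat_iff nat_le_iff ceiling_le_iff)
  show "nat \<lceil>c * N\<rceil> \<le> nat \<lceil>c * n\<rceil>"
    using N assms(3) by (intro nat_mono ceiling_mono) simp
  show "nat \<lceil>c * n\<rceil> \<le> n" using assms(3,4) by (simp add: nat_le_iff ceiling_le_iff mult_left_le_one_le)
  show "c * n \<le> nat \<lceil>c * n\<rceil>" by linarith
  have "c * (n - real N) \<le> n - real N"
    using N assms(3,4) by (intro mult_left_le_one_le) simp_all
  then have "c * n - c * N \<le> n - real N" by (simp add: right_diff_distrib)
  then have "\<lceil>c * n\<rceil> < \<lceil>c * N\<rceil> + int L"
    using N ceiling_correct[of "c * n"] ceiling_correct[of "c * N"] by linarith
  with cN show "nat \<lceil>c * n\<rceil> \<le> nat \<lceil>c * N\<rceil> + L" by linarith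
qed

lemma periodic_mod:
  fixes f :: "nat \<Rightarrow> 'a"
  assumes "\<And>i. f (i + L) = f i"
  shows "f (i mod L) = f i"
proof -
  have "f (a + q * L) = f a" for a q :: nat
  proof (induction q)
    case (Suc q)
    then show ?case using assms[of "a + q * L"] by (simp add: algebra_simps)
  qed simp
  from this[of "i mod L" "i div L"] show ?thesis by simp
qed

locale bounded_positive_seq =
  fixes x :: "nat \<Rightarrow> real" and mu M :: real
  assumes mu_pos: "0 < mu" and lower: "mu \<le> x i" and upper: "x i \<le> M"
begin

lemma x_pos: "0 < x i"
  using mu_pos lower[of i] by linarith

lemma M_pos: "0 < M"
  using x_pos[of 0] upper[of 0] by linarith

lemma S_pos: "j \<le> N \<Longrightarrow> 0 < S x N j"
  using esym_pos[of "{1..N}" x j] x_pos by (simp add: S_eq_esym)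

lemma S_Suc_right_bounds:
  assumes "j < N"
  shows "mu * S x N j \<le> S x N (Suc j)" "S x N (Suc j) \<le> M * S x N j"
proof -
  let ?e = "esym x {1..N}"
  define d where "d = (real N - real j) * (N choose j)"
  have d: "0 < d" using assms by (simp add: d_def)
  have S1: "S x N (Suc j) * d = (real j + 1) * ?e (Suc j)"
    unfolding S_eq_esym d_def Suc_times_choose_Suc[symmetric] using assms by simp
  have S0: "S x N j * d = (real N - real j) * ?e j"
    using assms by (simp add: S_eq_esym d_def)
  have "mu * S x N j * d = (real N - real j) * mu * ?e j"
    by (subst mult.assoc, subst S0) (simp add: algebra_simps)
  also have "\<dots> \<le> (real j + 1) * ?e (Suc j)"
    using esym_Suc_ge[of "{1..N}" mu x j] mu_pos lower by simp
  finally have "mu * S x N j * d \<le> S x N (Suc j) * d" by (simp only: S1)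
  with d show "mu * S x N j \<le> S x N (Suc j)" by (simp only: mult_le_cancel_right_pos)
  have "(real j + 1) * ?e (Suc j) \<le> (real N - real j) * M * ?e j"
    using esym_Suc_le[of "{1..N}" x M j] x_pos upper by (simp add: less_imp_le)
  also have "\<dots> = M * S x N j * d"
    by (subst mult.assoc, subst S0) (simp add: algebra_simps)
  finally have "S x N (Suc j) * d \<le> M * S x N j * d" by (simp only: S1)
  with d show "S x N (Suc j) \<le> M * S x N j" by (simp only: mult_le_cancel_right_pos)
qed

lemma S_Suc_left_bounds:
  assumes "1 \<le> j" "j \<le> N"
  shows "mu / M * S x N j \<le> S x (Suc N) j" "S x (Suc N) j \<le> M / mu * S x N j"
proof -
  obtain i where j: "j = Suc i" using assms(1) by (cases j) auto
  define c0 c1 where "c0 = real (N choose i)" and "c1 = real (N choose j)"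
  have c: "0 < c0" "0 < c1" using assms j by (simp_all add: c0_def c1_def)
  have S_Suc: "S x (Suc N) j = (c1 * S x N j + c0 * (x (Suc N) * S x N i)) / (c1 + c0)"
    using c by (simp add: S_eq_esym j c0_def c1_def atLeastAtMostSuc_conv esym_insert_Suc)
  have right: "mu * S x N i \<le> S x N j" "S x N j \<le> M * S x N i"
    using S_Suc_right_bounds[of i N] assms j by simp_all
  have pos: "0 < S x N i" "0 < S x N j" using S_pos assms j by simp_all
  have ratio: "mu / M \<le> 1" "1 \<le> M / mu"
    using lower[of 0] upper[of 0] mu_pos by simp_all
  have "mu / M * S x N j \<le> 1 * S x N j" "1 * S x N j \<le> M / mu * S x N j"
    using pos by (intro mult_right_mono ratio; simp)+
  moreover have "mu / M * S x N j \<le> x (Suc N) * S x N i"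
  proof -
    have "mu / M * S x N j \<le> mu * S x N i"
      using right(2) mu_pos M_pos by (simp add: field_simps)
    also have "\<dots> \<le> x (Suc N) * S x N i" using lower pos by (simp add: mult_right_mono)
    finally show ?thesis .
  qed
  moreover have "x (Suc N) * S x N i \<le> M / mu * S x N j"
  proof -
    have "x (Suc N) * S x N i \<le> M * S x N i" using upper pos by (simp add: mult_right_mono)
    also have "\<dots> \<le> M / mu * S x N j"
      using right(1) mu_pos M_pos by (simp add: field_simps)
    finally show ?thesis .
  qed
  ultimately show "mu / M * S x N j \<le> S x (Suc N) j" "S x (Suc N) j \<le> M / mu * S x N j"
    unfolding S_Suc using c by (intro weighted_mean_between; simp)+
qed

definition ln_step_bound :: real where
  "ln_step_bound = 2 * (\<bar>ln mu\<bar> + \<bar>ln M\<bar>)"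

lemma ln_S_Suc_right: "j < N \<Longrightarrow> \<bar>ln (S x N (Suc j)) - ln (S x N j)\<bar> \<le> ln_step_bound"
  using abs_ln_diff_le[of "S x N j" mu "S x N (Suc j)" M] S_Suc_right_bounds[of j N] S_pos[of j N]
    mu_pos by (simp add: ln_step_bound_def)

lemma ln_S_Suc_left:
  "1 \<le> j \<Longrightarrow> j \<le> N \<Longrightarrow> \<bar>ln (S x (Suc N) j) - ln (S x N j)\<bar> \<le> ln_step_bound"
  using abs_ln_diff_le[of "S x N j" "mu / M" "S x (Suc N) j" "M / mu"] S_Suc_left_bounds[of j N]
    S_pos[of j N] mu_pos M_pos by (simp add: ln_step_bound_def ln_div)

lemma abs_ln_S_le: "j \<le> N \<Longrightarrow> \<bar>ln (S x N j)\<bar> \<le> j * ln_step_bound"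
  using abs_diff_le_steps[of 0 j "\<lambda>j. ln (S x N j)" ln_step_bound] ln_S_Suc_right
  by (simp add: S_eq_esym)

lemma ln_S_add_right:
  "j + d \<le> N \<Longrightarrow> \<bar>ln (S x N (j + d)) - ln (S x N j)\<bar> \<le> d * ln_step_bound"
  using abs_diff_le_steps[of j d "\<lambda>j. ln (S x N j)" ln_step_bound] ln_S_Suc_right by simp

lemma ln_S_add_left:
  "1 \<le> j \<Longrightarrow> j \<le> N \<Longrightarrow> \<bar>ln (S x (N + d) j) - ln (S x N j)\<bar> \<le> d * ln_step_bound"
  using abs_diff_le_steps[of N d "\<lambda>N. ln (S x N j)" ln_step_bound] ln_S_Suc_left by simp

lemma ln_S_mean_diff:
  assumes "1 \<le> j" "j \<le> N" "j \<le> j'" "j' \<le> N'" "N \<le> N'" "j' \<le> j + d" "N' \<le> N + d"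
  shows "\<bar>ln (S x N' j') / j' - ln (S x N j) / j\<bar> \<le> 3 * d * ln_step_bound / j'"
proof -
  let ?B = ln_step_bound
  have B: "0 \<le> ?B" by (simp add: ln_step_bound_def)
  have "\<bar>ln (S x N' j) - ln (S x N j)\<bar> \<le> (N' - N) * ?B"
    using ln_S_add_left[of j N "N' - N"] assms by simp
  moreover have "\<bar>ln (S x N' j') - ln (S x N' j)\<bar> \<le> (j' - j) * ?B"
    using ln_S_add_right[of j "j' - j" N'] assms by simp
  moreover have "(N' - N) * ?B \<le> d * ?B" "(j' - j) * ?B \<le> d * ?B"
    using assms B by (simp_all add: mult_right_mono)
  ultimately have "\<bar>ln (S x N' j') - ln (S x N j)\<bar> \<le> 2 * d * ?B" by linarith
  moreover have "\<bar>ln (S x N j)\<bar> \<le> j * ?B" using abs_ln_S_le assms(2) .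
  ultimately have "\<bar>ln (S x N' j') / j' - ln (S x N j) / j\<bar> \<le> (2 * d * ?B + ?B * d) / j'"
    using assms by (intro abs_div_sub_div_le) auto
  then show ?thesis by (simp add: algebra_simps)
qed

lemma ln_root_S: "1 \<le> j \<Longrightarrow> j \<le> N \<Longrightarrow> ln (root j (S x N j)) = ln (S x N j) / j"
  using S_pos by (simp add: ln_root)

lemma abs_ln_root_S_le: "1 \<le> j \<Longrightarrow> j \<le> N \<Longrightarrow> \<bar>ln (root j (S x N j))\<bar> \<le> ln_step_bound"
  using abs_ln_S_le[of j N] by (simp add: ln_root_S abs_divide pos_divide_le_eq mult.commute)

lemma root_S_pos: "1 \<le> j \<Longrightarrow> j \<le> N \<Longrightarrow> 0 < root j (S x N j)"
  using S_pos by (intro real_root_gt_zero) auto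

lemma root_S_ge:
  assumes "1 \<le> j" "j \<le> N"
  shows "exp (- ln_step_bound) \<le> root j (S x N j)"
proof -
  have "exp (- ln_step_bound) \<le> exp (ln (root j (S x N j)))"
    using abs_ln_root_S_le[OF assms] by simp
  also have "\<dots> = root j (S x N j)" using root_S_pos[OF assms] by simp
  finally show ?thesis .
qed

lemma ln_root_S_ceiling_diff:
  fixes c :: real
  assumes "1 \<le> L" "L \<le> n" "0 < c" "c \<le> 1"
  shows "\<bar>ln (root (nat \<lceil>c * n\<rceil>) (S x n (nat \<lceil>c * n\<rceil>))) - ln (FXk x L (n div L) c)\<bar>
    \<le> 3 * L * ln_step_bound / c / n"
proof -
  define N where "N = n div L * L"
  define m m0 where "m = nat \<lceil>c * n\<rceil>" and "m0 = nat \<lceil>c * N\<rceil>"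
  note bounds = ceiling_block_bounds[OF assms, folded N_def, folded m_def m0_def]
  have "FXk x L (n div L) c = root m0 (S x N m0)"
    using assms(3) by (simp add: FXk_def N_def m0_def)
  then have "\<bar>ln (root m (S x n m)) - ln (FXk x L (n div L) c)\<bar> \<le> 3 * L * ln_step_bound / m"
    using bounds by (simp add: ln_root_S ln_S_mean_diff)
  also have "\<dots> \<le> 3 * L * ln_step_bound / (c * n)"
    using bounds assms by (intro divide_left_mono) (auto simp: ln_step_bound_def)
  finally show ?thesis by (simp add: m_def)
qed

lemma root_S_ceiling_tendsto:
  fixes c :: real
  assumes "1 \<le> L" "0 < c" "c \<le> 1" and lim: "(\<lambda>k. FXk x L k c) \<longlonglongrightarrow> l"
  shows "(\<lambda>n. root (nat \<lceil>c * n\<rceil>) (S x n (nat \<lceil>c * n\<rceil>))) \<longlonglongrightarrow> l"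
proof -
  let ?r = "\<lambda>n. root (nat \<lceil>c * n\<rceil>) (S x n (nat \<lceil>c * n\<rceil>))"
  let ?F = "\<lambda>n. FXk x L (n div L) c"
  have lim_F: "?F \<longlonglongrightarrow> l"
    using filterlim_compose[OF lim filterlim_at_top_div_const_nat] assms(1) by simp
  have "exp (- ln_step_bound) \<le> FXk x L k c" if "1 \<le> k" for k
  proof -
    let ?j = "nat \<lceil>c * (k * L)\<rceil>"
    have "1 \<le> ?j" "?j \<le> k * L"
      using ceiling_block_bounds[of L "k * L" c] that assms by simp_all
    then show ?thesis using assms(2) root_S_ge by (simp add: FXk_def)
  qed
  then have "exp (- ln_step_bound) \<le> l"
    by (intro LIMSEQ_le_const[OF lim] exI[of _ 1]) auto
  then have "0 < l" using exp_gt_zero less_le_trans by blast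
  then have "(\<lambda>n. ln (?F n)) \<longlonglongrightarrow> ln l"
    using lim_F by (intro tendsto_ln) auto
  moreover have "(\<lambda>n. ln (?r n) - ln (?F n)) \<longlonglongrightarrow> 0"
  proof (rule Lim_null_comparison)
    show "\<forall>\<^sub>F n in sequentially. norm (ln (?r n) - ln (?F n)) \<le> 3 * L * ln_step_bound / c / n"
      using ln_root_S_ceiling_diff assms unfolding eventually_sequentially by auto
  qed (rule lim_const_over_n)
  ultimately have "(\<lambda>n. exp ((ln (?r n) - ln (?F n)) + ln (?F n))) \<longlonglongrightarrow> exp (0 + ln l)"
    by (intro tendsto_exp tendsto_add)
  moreover have "exp ((ln (?r n) - ln (?F n)) + ln (?F n)) = ?r n" if "L \<le> n" for n
  proof -
    have m: "1 \<le> nat \<lceil>c * n\<rceil>" "nat \<lceil>c * n\<rceil> \<le> n"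
      using ceiling_block_bounds(1,5,7)[OF assms(1) that assms(2,3)] by linarith+
    then show ?thesis using root_S_pos[OF m] by simp
  qed
  then have "\<forall>\<^sub>F n in sequentially. exp ((ln (?r n) - ln (?F n)) + ln (?F n)) = ?r n"
    unfolding eventually_sequentially by blast
  ultimately have "?r \<longlonglongrightarrow> exp (0 + ln l)" by (rule Lim_transform_eventually)
  with \<open>0 < l\<close> show ?thesis by simp
qed

end

theorem lemma4p4:
  fixes x :: "nat \<Rightarrow> real" and L :: nat
  assumes "L \<ge> 1"
    and "\<And>i. x i > 0"
    and "\<And>i. x (i + L) = x i"
    and "\<forall>c\<in>{0..1}. \<exists>l. (\<lambda>k. FXk x L k c) \<longlonglongrightarrow> l"
    and "continuous_on {0..1} (\<lambda>c. lim (\<lambda>k. FXk x L k c))"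
  shows "\<forall>c\<in>{0<..1}. (\<lambda>n. root (nat \<lceil>c * real n\<rceil>) (S x n (nat \<lceil>c * real n\<rceil>)))
           \<longlonglongrightarrow> lim (\<lambda>k. FXk x L k c)"
proof
  fix c :: real assume c: "c \<in> {0<..1}"
  define A where "A = x ` {..<L}"
  have A: "finite A" "A \<noteq> {}" using assms(1) by (auto simp: A_def lessThan_empty_iff)
  have x_in: "x i \<in> A" for i
    unfolding A_def periodic_mod[of x L i, OF assms(3), symmetric] using assms(1) by simp
  interpret bounded_positive_seq x "Min A" "Max A"
  proof
    show "0 < Min A" using Min_in[OF A] assms(2) by (auto simp: A_def)
  qed (use A x_in in auto)
  obtain l where l: "(\<lambda>k. FXk x L k c) \<longlonglongrightarrow> l" using assms(4) c by fastforce
  with assms(1) c show "(\<lambda>n. root (nat \<lceil>c * n\<rceil>) (S x n (nat \<lceil>c * n\<rceil>))) \<longlonglongrightarrow> lim (\<lambda>k. FXk x L k c)"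
    by (simp add: root_S_ceiling_tendsto limI)
qed

end
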